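(* Let $r\ge1$ and let $p_1,p_2,\ldots,p_r$ be primes, each $\ge5$ (not necessarily distinct). Then for every $n\ge0$, \[ b_2\!\left(\prod_{s=1}^{r-1}p_s^2\,p_{r}\, n+\frac{(24j+1)\prod_{s=1}^{r-1}p_s^2-1}{24}\right)\equiv 0 \pmod 2 \] for every integer $j$ with $0\le j\le p_r-1$ and $\left(\frac{24j+1}{p_r}\right)=-1$ (with the empty product equal to $1$).
   Context: For a positive integer $\ell$, $b_\ell(n)$ denotes the number of partitions of $n$ having no part divisible by $\ell$. $\left(\frac{a}{p}\right)$ is the Legendre symbol. *)

theory Defs
  imports "HOL-Number_Theory.Number_Theory" "HOL-Library.Multiset"
begin

definition b :: "nat \<Rightarrow> nat \<Rightarrow> nat" where
  "b l n = card {M :: nat multiset. (\<forall>x\<in>#M. 0 < x \<and> \<not> l dvd x) \<and> sum_mset M = n}"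

end

theory Submission
  imports Defs "HOL-Library.Nat_Bijection" "HOL-Library.Disjoint_Sets" "HOL-Library.Numeral_Type"
begin

text \<open>Glaisher's bijection (write each distinct part as an odd number times a power of two and
  merge equal odd parts) shows that \<open>b 2 N\<close> counts the partitions of \<open>N\<close> into distinct parts.
  Franklin's involution pairs these up, its only fixed points being the partitions
  \<open>{k, k+1, ..., 2k-1}\<close> and \<open>{k+1, ..., 2k}\<close> of the generalised pentagonal numbers, so the count
  is even unless \<open>24 N + 1\<close> is a square. For the argument \<open>N\<close> of the theorem,
  \<open>24 N + 1 = R\<^sup>2 (24 (p r * n + j) + 1)\<close> with \<open>R = p 1 * \<dots> * p (r - 1)\<close>, because
  \<open>q\<^sup>2 \<equiv> 1 (mod 24)\<close> for primes \<open>q \<ge> 5\<close>; the second factor is congruent to the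
  non-residue \<open>24 j + 1\<close> modulo \<open>p r\<close>, so \<open>24 N + 1\<close> is not a square.\<close>

definition odd_part :: "nat \<Rightarrow> nat" where
  "odd_part x = x div 2 ^ multiplicity 2 x"

lemma odd_part_times_power: "odd_part x * 2 ^ multiplicity 2 x = x"
  by (simp add: odd_part_def multiplicity_dvd)

lemma odd_odd_part: "x \<noteq> 0 \<Longrightarrow> odd (odd_part x)"
  unfolding odd_part_def by (rule multiplicity_decompose) simp_all

lemma
  assumes "odd k"
  shows multiplicity_odd_times_power: "multiplicity 2 (k * 2 ^ i) = i"
    and odd_part_odd_times_power: "odd_part (k * 2 ^ i) = k"
proof -
  show i: "multiplicity 2 (k * 2 ^ i) = i"
    using assms by (intro multiplicity_decomposeI[of _ _ _ k]) simp_all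
  show "odd_part (k * 2 ^ i) = k"
    by (simp add: odd_part_def i)
qed

definition distinct_partitions :: "nat \<Rightarrow> nat set set" where
  "distinct_partitions N = {S. finite S \<and> 0 \<notin> S \<and> \<Sum>S = N}"

definition odd_partitions :: "nat \<Rightarrow> nat multiset set" where
  "odd_partitions N = {M. (\<forall>x\<in>#M. odd x) \<and> sum_mset M = N}"

lemma b_2_eq_card_odd_partitions: "b 2 N = card (odd_partitions N)"
  unfolding b_def odd_partitions_def by (metis odd_pos)

definition glaisher_merge :: "nat set \<Rightarrow> nat multiset" where
  "glaisher_merge S = (\<Sum>x\<in>S. replicate_mset (2 ^ multiplicity 2 x) (odd_part x))"

text \<open>A part \<open>k\<close> occurring \<open>c\<close> times is split into the distinct parts \<open>k * 2 ^ i\<close>,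
  \<open>i\<close> ranging over the binary digits of \<open>c\<close>.\<close>
definition glaisher_split :: "nat multiset \<Rightarrow> nat set" where
  "glaisher_split M = (\<lambda>(k, i). k * 2 ^ i) ` (SIGMA k:set_mset M. set_decode (count M k))"

lemma finite_glaisher_split: "finite (glaisher_split M)"
  unfolding glaisher_split_def by auto

lemma mem_glaisher_split:
  "x \<in> glaisher_split M \<longleftrightarrow> (\<exists>k i. x = k * 2 ^ i \<and> k \<in># M \<and> i \<in> set_decode (count M k))"
  unfolding glaisher_split_def by auto

lemma finite_exponents: "finite S \<Longrightarrow> (k::nat) \<noteq> 0 \<Longrightarrow> finite {i. k * 2 ^ i \<in> S}"
  using finite_vimageI[of S "\<lambda>i. k * 2 ^ i"] by (simp add: inj_on_def vimage_def power_inject_exp)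

lemma count_glaisher_merge:
  assumes "finite S" "0 \<notin> S" "odd k"
  shows "count (glaisher_merge S) k = set_encode {i. k * 2 ^ i \<in> S}"
proof -
  have "count (glaisher_merge S) k = (\<Sum>x\<in>S. if odd_part x = k then 2 ^ multiplicity 2 x else 0)"
    unfolding glaisher_merge_def count_sum by (intro sum.cong) auto
  also have "\<dots> = (\<Sum>x\<in>{x\<in>S. odd_part x = k}. 2 ^ multiplicity 2 x)"
    using assms(1) by (simp add: sum.inter_filter)
  also have "\<dots> = (\<Sum>i\<in>{i. k * 2 ^ i \<in> S}. 2 ^ i)"
  proof (rule sum.reindex_bij_witness[of _ "\<lambda>i. k * 2 ^ i" "multiplicity 2"])
    fix x assume "x \<in> {x\<in>S. odd_part x = k}"
    then show "k * 2 ^ multiplicity 2 x = x" "multiplicity 2 x \<in> {i. k * 2 ^ i \<in> S}"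
      using odd_part_times_power[of x] by auto
  qed (use assms in \<open>auto simp: multiplicity_odd_times_power odd_part_odd_times_power\<close>)
  finally show ?thesis by (simp add: set_encode_def)
qed

lemma count_glaisher_merge_even:
  assumes "0 \<notin> S" "even k"
  shows "count (glaisher_merge S) k = 0"
  unfolding glaisher_merge_def count_sum using assms odd_odd_part
  by (intro sum.neutral) (metis count_replicate_mset)

lemma sum_mset_glaisher_merge: "finite S \<Longrightarrow> sum_mset (glaisher_merge S) = \<Sum>S"
  unfolding glaisher_merge_def
  by (induction S rule: finite_induct) (simp_all add: odd_part_times_power mult.commute)

lemma glaisher_merge_split:
  assumes odd: "\<forall>x\<in>#M. odd x"
  shows "glaisher_merge (glaisher_split M) = M"
proof (rule multiset_eqI)
  fix k
  have split: "finite (glaisher_split M)" "0 \<notin> glaisher_split M"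
    using odd by (auto simp: finite_glaisher_split mem_glaisher_split)
  show "count (glaisher_merge (glaisher_split M)) k = count M k"
  proof (cases "odd k")
    case True
    have "{i. k * 2 ^ i \<in> glaisher_split M} = set_decode (count M k)"
    proof (intro Set.set_eqI iffI)
      fix i assume "i \<in> {i. k * 2 ^ i \<in> glaisher_split M}"
      then obtain k' i' where e: "k * 2 ^ i = k' * 2 ^ i'" "k' \<in># M" "i' \<in> set_decode (count M k')"
        unfolding mem_glaisher_split by blast
      have "odd k'" using e(2) odd by blast
      then have "k' = k \<and> i' = i"
        using e(1) True by (metis multiplicity_odd_times_power odd_part_odd_times_power)
      then show "i \<in> set_decode (count M k)" using e(3) by simp
    next
      fix i assume i: "i \<in> set_decode (count M k)"
      then have "k \<in># M" by (metis count_eq_zero_iff set_decode_zero empty_iff)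
      then show "i \<in> {i. k * 2 ^ i \<in> glaisher_split M}" using i unfolding mem_glaisher_split by blast
    qed
    then show ?thesis using count_glaisher_merge[OF split True] by simp
  next
    case False
    then have "count M k = 0" using odd by (metis count_eq_zero_iff)
    then show ?thesis using count_glaisher_merge_even[OF split(2)] False by simp
  qed
qed

lemma glaisher_split_merge:
  assumes S: "finite S" "0 \<notin> S"
  shows "glaisher_split (glaisher_merge S) = S"
proof (intro Set.set_eqI iffI)
  fix x assume "x \<in> glaisher_split (glaisher_merge S)"
  then obtain k i where x: "x = k * 2 ^ i" "k \<in># glaisher_merge S"
      "i \<in> set_decode (count (glaisher_merge S) k)"
    unfolding mem_glaisher_split by blast
  have "odd k" using x(2) count_glaisher_merge_even[OF S(2)] by (metis count_eq_zero_iff)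
  then show "x \<in> S"
    using x count_glaisher_merge[OF S \<open>odd k\<close>] finite_exponents[OF S(1), of k] odd_pos
    by auto
next
  fix x assume "x \<in> S"
  then have "x \<noteq> 0" using S(2) by (cases x) auto
  define k where "k = odd_part x"
  have k: "odd k" "x = k * 2 ^ multiplicity 2 x"
    using odd_odd_part[OF \<open>x \<noteq> 0\<close>] odd_part_times_power[of x] by (simp_all add: k_def)
  have "multiplicity 2 x \<in> set_decode (count (glaisher_merge S) k)"
    using count_glaisher_merge[OF S k(1)] finite_exponents[OF S(1), of k] \<open>x \<in> S\<close> k odd_pos
    by auto
  moreover then have "k \<in># glaisher_merge S"
    by (metis count_eq_zero_iff set_decode_zero empty_iff)
  ultimately show "x \<in> glaisher_split (glaisher_merge S)"
    unfolding mem_glaisher_split using k by blast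
qed

theorem b_2_eq_card_distinct_partitions: "b 2 N = card (distinct_partitions N)"
proof -
  have "bij_betw glaisher_merge (distinct_partitions N) (odd_partitions N)"
  proof (rule bij_betw_byWitness[of _ glaisher_split])
    show "\<forall>S\<in>distinct_partitions N. glaisher_split (glaisher_merge S) = S"
      by (simp add: distinct_partitions_def glaisher_split_merge)
    show "\<forall>M\<in>odd_partitions N. glaisher_merge (glaisher_split M) = M"
      by (simp add: odd_partitions_def glaisher_merge_split)
    show "glaisher_merge ` distinct_partitions N \<subseteq> odd_partitions N"
      using count_glaisher_merge_even
      by (auto simp: distinct_partitions_def odd_partitions_def sum_mset_glaisher_merge)
        (metis count_eq_zero_iff)
    show "glaisher_split ` odd_partitions N \<subseteq> distinct_partitions N"
      by (auto simp: distinct_partitions_def odd_partitions_def finite_glaisher_split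
          mem_glaisher_split)
        (metis glaisher_merge_split sum_mset_glaisher_merge finite_glaisher_split)
  qed
  then show ?thesis
    using bij_betw_same_card b_2_eq_card_odd_partitions by metis
qed

definition nonempty_distinct_partition :: "nat set \<Rightarrow> bool" where
  "nonempty_distinct_partition S \<longleftrightarrow> finite S \<and> S \<noteq> {} \<and> 0 \<notin> S"

definition run_length :: "nat set \<Rightarrow> nat" where
  "run_length S = (LEAST k. Max S - k \<notin> S)"

lemma
  assumes "nonempty_distinct_partition S"
  shows run_length_notin: "Max S - run_length S \<notin> S"
    and run_length_less: "k < run_length S \<Longrightarrow> Max S - k \<in> S"
    and run_length_pos: "1 \<le> run_length S"
    and run_length_le_Max: "run_length S \<le> Max S"
proof -
  have ex: "Max S - Max S \<notin> S" using assms by (simp add: nonempty_distinct_partition_def)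
  show notin: "Max S - run_length S \<notin> S" unfolding run_length_def using ex by (rule LeastI)
  show "k < run_length S \<Longrightarrow> Max S - k \<in> S" unfolding run_length_def using not_less_Least by blast
  show "run_length S \<le> Max S" unfolding run_length_def using ex by (rule Least_le)
  have "Max S \<in> S" using assms by (simp add: nonempty_distinct_partition_def)
  then show "1 \<le> run_length S" using notin by (cases "run_length S") auto
qed

lemma nonempty_distinct_partition_Min_pos: "nonempty_distinct_partition S \<Longrightarrow> 0 < Min S"
  unfolding nonempty_distinct_partition_def by (metis Min_in gr0I)

lemma Min_le_run_start:
  assumes "nonempty_distinct_partition S"
  shows "Min S \<le> Max S - run_length S + 1"
proof -
  have "run_length S - 1 < run_length S" using run_length_pos[OF assms] by simp
  then have "Max S - (run_length S - 1) \<in> S" by (rule run_length_less[OF assms])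
  moreover have "Max S - (run_length S - 1) = Max S - run_length S + 1"
    using run_length_pos[OF assms] run_length_le_Max[OF assms] by simp
  ultimately show ?thesis using assms by (metis Min_le nonempty_distinct_partition_def)
qed

lemma run_length_eqI:
  assumes "nonempty_distinct_partition S" "Max S - k \<notin> S" "\<And>j. j < k \<Longrightarrow> Max S - j \<in> S"
  shows "run_length S = k"
  unfolding run_length_def using assms by (intro Least_equality) (auto simp: not_less[symmetric])

text \<open>Franklin's involution, with \<open>s\<close> the smallest part and \<open>r\<close> the number of consecutive
  integers ending at the largest part. If \<open>s \<le> r\<close>, remove the part \<open>s\<close> and add 1 to the
  \<open>s\<close> largest parts; otherwise subtract 1 from the \<open>r\<close> largest parts and add the new part
  \<open>r\<close>. The two excluded cases, where the run reaches down to the smallest part, are the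
  fixed points.\<close>
definition franklin :: "nat set \<Rightarrow> nat set" where
  "franklin S = (let m = Max S; s = Min S; r = run_length S in
     if s \<le> r \<and> \<not> (s = r \<and> s = m - r + 1) then insert (m + 1) (S - {s, m - s + 1})
     else if r < s \<and> \<not> (s = r + 1 \<and> s = m - r + 1) then insert (m - r) (insert r (S - {m}))
     else S)"

lemma franklin_up:
  assumes S: "nonempty_distinct_partition S" and up: "Min S \<le> run_length S"
    and not_fixed: "\<not> (Min S = run_length S \<and> Min S = Max S - run_length S + 1)"
  defines "S' \<equiv> insert (Max S + 1) (S - {Min S, Max S - Min S + 1})"
  shows "franklin S = S'" "nonempty_distinct_partition S'" "\<Sum>S' = \<Sum>S" "S' \<noteq> S"
    and "2 * Min S \<le> Max S" "Max S - Min S + 1 \<in> S"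
proof -
  define m s r where "m = Max S" and "s = Min S" and "r = run_length S"
  have fin: "finite S" "S \<noteq> {}" "0 \<notin> S" using S by (auto simp: nonempty_distinct_partition_def)
  have r: "1 \<le> r" "r \<le> m" "s \<le> m - r + 1" "\<And>k. k < r \<Longrightarrow> m - k \<in> S"
    using run_length_pos[OF S] run_length_le_Max[OF S] Min_le_run_start[OF S] run_length_less[OF S]
    by (simp_all add: m_def s_def r_def)
  have sS: "s \<in> S" and mS: "m + 1 \<notin> S"
    using fin Max_ge not_less_eq_eq by (auto simp: s_def m_def)
  have "s \<le> m" using fin by (simp add: s_def m_def)
  moreover have "0 < s" using nonempty_distinct_partition_Min_pos[OF S] by (simp only: s_def)
  ultimately have tS: "m - s + 1 \<in> S" using r(4)[of "s - 1"] up unfolding s_def r_def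
    by (simp add: Suc_diff_le)
  have st: "s < m - s + 1" using up not_fixed r(1-3) unfolding s_def r_def m_def by linarith
  then show "2 * Min S \<le> Max S" "Max S - Min S + 1 \<in> S" using tS by (simp_all add: s_def m_def)
  have S'_eq: "S' = insert (m + 1) (S - {s, m - s + 1})" by (simp add: S'_def m_def s_def)
  show "franklin S = S'" using up not_fixed unfolding franklin_def Let_def S'_def by simp
  show "nonempty_distinct_partition S'"
    using fin unfolding S'_eq nonempty_distinct_partition_def by auto
  define R where "R = S - {s, m - s + 1}"
  have S_eq: "S = insert s (insert (m - s + 1) R)" using sS tS by (auto simp: R_def)
  have "\<Sum>S = s + (m - s + 1) + \<Sum>R" unfolding S_eq using fin st by (simp add: R_def)
  moreover have "\<Sum>S' = (m + 1) + \<Sum>R" unfolding S'_eq R_def using fin mS by simp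
  ultimately show "\<Sum>S' = \<Sum>S" using st by linarith
  show "S' \<noteq> S" using mS S'_eq by auto
qed

lemma franklin_up_shape:
  assumes S: "nonempty_distinct_partition S" and up: "Min S \<le> run_length S"
    and not_fixed: "\<not> (Min S = run_length S \<and> Min S = Max S - run_length S + 1)"
  shows "Max (franklin S) = Max S + 1" "Min S < Min (franklin S)" "run_length (franklin S) = Min S"
proof -
  define m s where "m = Max S" and "s = Min S"
  have S'_eq: "franklin S = insert (m + 1) (S - {s, m - s + 1})"
    using franklin_up(1)[OF assms] by (simp add: m_def s_def)
  have S': "nonempty_distinct_partition (franklin S)" using franklin_up(1,2)[OF assms] by simp
  then have fin': "finite (franklin S)" "franklin S \<noteq> {}"
    by (auto simp: nonempty_distinct_partition_def)
  have bounds: "s \<le> x \<and> x \<le> m" if "x \<in> S" for x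
    using S that by (simp add: s_def m_def nonempty_distinct_partition_def)
  have st: "2 * s \<le> m" using franklin_up(5)[OF assms] by (simp add: s_def m_def)
  have "0 < s" using nonempty_distinct_partition_Min_pos[OF S] by (simp only: s_def)
  have Max': "Max (franklin S) = m + 1"
    using fin' bounds unfolding S'_eq by (intro Max_eqI) fastforce+
  then show "Max (franklin S) = Max S + 1" by (simp add: m_def)
  have "s < Min (franklin S)"
    using fin' bounds st unfolding S'_eq by (subst Min_gr_iff) (auto simp: le_neq_implies_less)
  then show "Min S < Min (franklin S)" by (simp add: s_def)
  show "run_length (franklin S) = Min S"
  proof (rule run_length_eqI[OF S'])
    have "m - s + 1 \<notin> franklin S" unfolding S'_eq using st \<open>0 < s\<close> by auto
    then show "Max (franklin S) - Min S \<notin> franklin S" using Max' st by (simp add: s_def Suc_diff_le)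
  next
    fix j assume j: "j < Min S"
    show "Max (franklin S) - j \<in> franklin S"
    proof (cases j)
      case 0 then show ?thesis using Max_in[OF fin'] by simp
    next
      case (Suc i)
      have "m - i \<in> S" using run_length_less[OF S, of i] j Suc up by (simp add: m_def)
      moreover have "m - i \<noteq> s" "m - i \<noteq> m - s + 1" using j Suc st by (auto simp: s_def)
      ultimately show ?thesis using Max' Suc unfolding S'_eq by simp
    qed
  qed
qed

lemma franklin_down:
  assumes S: "nonempty_distinct_partition S" and down: "run_length S < Min S"
    and not_fixed: "\<not> (Min S = run_length S + 1 \<and> Min S = Max S - run_length S + 1)"
  defines "S' \<equiv> insert (Max S - run_length S) (insert (run_length S) (S - {Max S}))"
  shows "franklin S = S'" "nonempty_distinct_partition S'" "\<Sum>S' = \<Sum>S" "S' \<noteq> S"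
    and "2 * run_length S < Max S"
proof -
  define m s r where "m = Max S" and "s = Min S" and "r = run_length S"
  have fin: "finite S" "S \<noteq> {}" "0 \<notin> S" using S by (auto simp: nonempty_distinct_partition_def)
  have r: "1 \<le> r" "r \<le> m" "s \<le> m - r + 1" "m - r \<notin> S"
    using run_length_pos[OF S] run_length_le_Max[OF S] Min_le_run_start[OF S] run_length_notin[OF S]
    by (simp_all add: m_def s_def r_def)
  have mS: "m \<in> S" and rS: "r \<notin> S"
    using fin down Min_le not_le by (auto simp: m_def s_def r_def)
  have rmr: "r < m - r" using down not_fixed r(1-3) unfolding s_def r_def m_def by linarith
  then show "2 * run_length S < Max S" by (simp add: r_def m_def)
  have S'_eq: "S' = insert (m - r) (insert r (S - {m}))" by (simp add: S'_def m_def r_def)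
  show "franklin S = S'" using down not_fixed unfolding franklin_def Let_def S'_def by auto
  show "nonempty_distinct_partition S'"
    using fin r rmr unfolding S'_eq nonempty_distinct_partition_def by auto
  define R where "R = S - {m}"
  have "\<Sum>S = m + \<Sum>R" unfolding R_def using sum.remove[OF fin(1) mS, of "\<lambda>x. x"] by simp
  moreover have "\<Sum>S' = (m - r) + r + \<Sum>R" unfolding S'_eq R_def[symmetric]
    using fin rmr r(4) rS by (simp add: R_def)
  ultimately show "\<Sum>S' = \<Sum>S" using r(2) by simp
  show "S' \<noteq> S" using rS S'_eq by auto
qed

lemma franklin_down_shape:
  assumes S: "nonempty_distinct_partition S" and down: "run_length S < Min S"
    and not_fixed: "\<not> (Min S = run_length S + 1 \<and> Min S = Max S - run_length S + 1)"
  shows "Max (franklin S) = Max S - 1" "Min (franklin S) = run_length S"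
    and "run_length S \<le> run_length (franklin S)"
proof -
  define m r where "m = Max S" and "r = run_length S"
  have S'_eq: "franklin S = insert (m - r) (insert r (S - {m}))"
    using franklin_down(1)[OF assms] by (simp add: m_def r_def)
  have S': "nonempty_distinct_partition (franklin S)" using franklin_down(1,2)[OF assms] by simp
  then have fin': "finite (franklin S)" "franklin S \<noteq> {}"
    by (auto simp: nonempty_distinct_partition_def)
  have bounds: "r < x \<and> x \<le> m" if "x \<in> S" for x
    using S that down Min_le[of S x] by (auto simp: r_def m_def nonempty_distinct_partition_def)
  have r: "1 \<le> r" "\<And>k. k < r \<Longrightarrow> m - k \<in> S"
    using run_length_pos[OF S] run_length_less[OF S] by (simp_all add: m_def r_def)
  have rmr: "r < m - r" using franklin_down(5)[OF assms] by (simp add: m_def r_def)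
  have "m - 1 \<in> franklin S"
  proof (cases "r = 1")
    case False
    then have "m - 1 \<in> S" using r(1) r(2)[of 1] by simp
    then show ?thesis using rmr unfolding S'_eq by auto
  qed (simp add: S'_eq)
  moreover have "x \<le> m - 1" if "x \<in> franklin S" for x
    using that bounds[of x] r(1) rmr unfolding S'_eq by auto
  ultimately have Max': "Max (franklin S) = m - 1" using fin' by (intro Max_eqI) auto
  then show "Max (franklin S) = Max S - 1" by (simp add: m_def)
  have "r \<le> x" if "x \<in> franklin S" for x
    using that bounds[of x] rmr unfolding S'_eq by auto
  then have "Min (franklin S) = r" using fin' by (intro Min_eqI) (auto simp: S'_eq)
  then show "Min (franklin S) = run_length S" by (simp add: r_def)
  show "run_length S \<le> run_length (franklin S)"
  proof (rule ccontr)
    assume "\<not> run_length S \<le> run_length (franklin S)"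
    then have less: "run_length (franklin S) < r" by (simp add: r_def)
    have "Max (franklin S) - run_length (franklin S) \<in> franklin S"
    proof (cases "run_length (franklin S) + 1 < r")
      case True
      then have "m - (run_length (franklin S) + 1) \<in> S" using r(2) by blast
      then show ?thesis using True rmr Max' unfolding S'_eq by auto
    next
      case False
      then have "Max (franklin S) - run_length (franklin S) = m - r" using less Max' rmr by simp
      then show ?thesis unfolding S'_eq by simp
    qed
    then show False using run_length_notin[OF S'] by simp
  qed
qed

lemma franklin_franklin_up:
  assumes S: "nonempty_distinct_partition S" and up: "Min S \<le> run_length S"
    and not_fixed: "\<not> (Min S = run_length S \<and> Min S = Max S - run_length S + 1)"
  shows "franklin (franklin S) = S"
proof -
  define S' where "S' = franklin S"
  have S': "nonempty_distinct_partition S'" "Max S' = Max S + 1" "Min S < Min S'"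
      "run_length S' = Min S"
    using franklin_up(1,2)[OF assms] franklin_up_shape[OF assms] by (simp_all add: S'_def)
  have st: "2 * Min S \<le> Max S" "Max S - Min S + 1 \<in> S" using franklin_up(5,6)[OF assms] by simp_all
  have "\<not> (Min S' = run_length S' + 1 \<and> Min S' = Max S' - run_length S' + 1)"
    using S'(2,4) st(1) by auto
  then have "franklin S' = insert (Max S' - run_length S') (insert (run_length S') (S' - {Max S'}))"
    using franklin_down(1) S'(1,3,4) by simp
  also have "\<dots> = insert (Max S - Min S + 1) (insert (Min S) (S' - {Max S + 1}))"
    using S'(2,4) st(1) by (simp add: Suc_diff_le)
  also have "\<dots> = S"
  proof -
    have "finite S" "S \<noteq> {}" using S by (simp_all add: nonempty_distinct_partition_def)
    then have "Min S \<in> S" "Max S + 1 \<notin> S" using Max_ge not_less_eq_eq by auto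
    then show ?thesis using st(2) by (auto simp: S'_def franklin_up(1)[OF assms])
  qed
  finally show ?thesis by (simp add: S'_def)
qed

lemma franklin_franklin_down:
  assumes S: "nonempty_distinct_partition S" and down: "run_length S < Min S"
    and not_fixed: "\<not> (Min S = run_length S + 1 \<and> Min S = Max S - run_length S + 1)"
  shows "franklin (franklin S) = S"
proof -
  define S' where "S' = franklin S"
  have S': "nonempty_distinct_partition S'" "Max S' = Max S - 1" "Min S' = run_length S"
      "run_length S \<le> run_length S'"
    using franklin_down(1,2)[OF assms] franklin_down_shape[OF assms] by (simp_all add: S'_def)
  have rmr: "2 * run_length S < Max S" by (rule franklin_down(5)[OF assms])
  have "\<not> (Min S' = run_length S' \<and> Min S' = Max S' - run_length S' + 1)"
    using S'(2,3) rmr by auto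
  then have "franklin S' = insert (Max S' + 1) (S' - {Min S', Max S' - Min S' + 1})"
    using franklin_up(1) S'(1,3,4) by simp
  also have "\<dots> = insert (Max S) (S' - {run_length S, Max S - run_length S})"
    using S'(2,3) rmr by (simp add: Suc_diff_Suc)
  also have "\<dots> = S"
  proof -
    have "finite S" "S \<noteq> {}" using S by (simp_all add: nonempty_distinct_partition_def)
    then have "Max S \<in> S" "run_length S \<notin> S" using down Min_le not_le by auto
    then show ?thesis using rmr run_length_notin[OF S]
      by (auto simp: S'_def franklin_down(1)[OF assms])
  qed
  finally show ?thesis by (simp add: S'_def)
qed

lemma sum_interval_doubled: "2 * \<Sum>{a..<a + c} + c = c * (2 * a + (c::nat))"
  by (induction c) (auto simp: algebra_simps)

lemma pentagonal_square:
  assumes "0 < r" "s = r \<or> s = (r::nat) + 1"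
  shows "24 * \<Sum>{s..<s + r} + 1 = (2 * s + 4 * r - 1) ^ 2"
proof -
  obtain q where q: "r = Suc q" using assms(1) by (cases r) auto
  have "2 * \<Sum>{s..<s + r} + r = r * (2 * s + r)" by (rule sum_interval_doubled)
  with assms(2) show ?thesis unfolding q power2_eq_square by (auto simp: algebra_simps)
qed

lemma franklin_fixed_point:
  assumes S: "nonempty_distinct_partition S" and fixed: "franklin S = S"
  shows "S = {Min S..<Min S + run_length S}"
    and "Min S = run_length S \<or> Min S = run_length S + 1"
proof -
  define m s r where "m = Max S" and "s = Min S" and "r = run_length S"
  have excluded: "(s = r \<and> s = m - r + 1) \<or> (s = r + 1 \<and> s = m - r + 1)"
    using franklin_up(1,4)[OF S] franklin_down(1,4)[OF S] fixed not_le
    unfolding m_def s_def r_def by metis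
  then show "Min S = run_length S \<or> Min S = run_length S + 1" by (auto simp: s_def r_def)
  have bounds: "s \<le> x \<and> x \<le> m" if "x \<in> S" for x
    using S that by (simp add: s_def m_def nonempty_distinct_partition_def)
  have r: "r \<le> m" "\<And>k. k < r \<Longrightarrow> m - k \<in> S"
    using run_length_le_Max[OF S] run_length_less[OF S] by (simp_all add: m_def r_def)
  have "S = {s..<s + r}"
  proof (intro Set.set_eqI iffI)
    fix x assume "x \<in> S"
    then show "x \<in> {s..<s + r}" using bounds[of x] excluded r(1) by auto
  next
    fix x assume x: "x \<in> {s..<s + r}"
    then have "m - x < r" using excluded by auto
    then have "m - (m - x) \<in> S" by (rule r(2))
    then show "x \<in> S" using x excluded r(1) by auto
  qed
  then show "S = {Min S..<Min S + run_length S}" by (simp add: s_def r_def)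
qed

lemma franklin_fixed_point_square:
  assumes "nonempty_distinct_partition S" "franklin S = S"
  shows "\<exists>x. 24 * \<Sum>S + 1 = x ^ 2"
proof -
  have "0 < run_length S" using run_length_pos[OF assms(1)] by simp
  from pentagonal_square[OF this franklin_fixed_point(2)[OF assms]]
  show ?thesis by (subst franklin_fixed_point(1)[OF assms]) blast
qed

lemma franklin_involution:
  assumes S: "nonempty_distinct_partition S" and moved: "franklin S \<noteq> S"
  shows "nonempty_distinct_partition (franklin S)" "\<Sum>(franklin S) = \<Sum>S"
    "franklin (franklin S) = S"
proof -
  let ?s = "Min S" and ?r = "run_length S" and ?m = "Max S"
  have "?s \<le> ?r \<and> \<not> (?s = ?r \<and> ?s = ?m - ?r + 1) \<or> ?r < ?s \<and> \<not> (?s = ?r + 1 \<and> ?s = ?m - ?r + 1)"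
    using moved unfolding franklin_def Let_def by (auto split: if_splits)
  then show "nonempty_distinct_partition (franklin S)" "\<Sum>(franklin S) = \<Sum>S"
    "franklin (franklin S) = S"
    using franklin_up(1-3)[OF S] franklin_franklin_up[OF S]
      franklin_down(1-3)[OF S] franklin_franklin_down[OF S] by (metis not_le)+
qed

lemma even_card_involution:
  assumes "\<And>x. x \<in> X \<Longrightarrow> f x \<in> X" "\<And>x. x \<in> X \<Longrightarrow> f (f x) = x"
    "\<And>x. x \<in> X \<Longrightarrow> f x \<noteq> x"
  shows "even (card X)"
proof -
  have "(\<Sum>x\<in>X. 1 :: 2) = 0"
    by (rule sum_involution_eq_0[where h = f]) (use assms in auto)
  then have "of_nat (card X) = (0 :: 2)" by simp
  moreover have "CHAR(2) = 2" by (rule CHAR_eq_posI) (auto simp: less_2_cases_iff)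
  ultimately show ?thesis by (simp add: of_nat_eq_0_iff_char_dvd)
qed

theorem even_card_distinct_partitions:
  assumes not_square: "\<nexists>x. 24 * N + 1 = x ^ 2"
  shows "even (card (distinct_partitions N))"
proof (rule even_card_involution[of _ franklin])
  fix S assume "S \<in> distinct_partitions N"
  moreover have "N \<noteq> 0" using not_square by (metis add_0 mult_0_right one_power2)
  ultimately have S: "nonempty_distinct_partition S" "\<Sum>S = N"
    by (auto simp: distinct_partitions_def nonempty_distinct_partition_def)
  then show moved: "franklin S \<noteq> S" using franklin_fixed_point_square not_square by blast
  show "franklin S \<in> distinct_partitions N" "franklin (franklin S) = S"
    using franklin_involution[OF S(1) moved] S
    by (auto simp: distinct_partitions_def nonempty_distinct_partition_def)
qed

lemma power2_mod_24_eq_1: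
  fixes q :: nat
  assumes "odd q" "\<not> 3 dvd q"
  shows "q ^ 2 mod 24 = 1"
proof -
  have "q mod 24 \<in> {..<24}" "odd (q mod 24)" "\<not> 3 dvd q mod 24"
    using assms by (simp_all add: odd_iff_mod_2_eq_one mod_mod_cancel dvd_mod_iff)
  then have "(q mod 24) ^ 2 mod 24 = 1"
    by (auto simp: lessThan_nat_numeral power2_eq_square)
  then show ?thesis by (simp add: power_mod)
qed

lemma prod_primes_power2_mod_24:
  fixes p :: "'a \<Rightarrow> nat"
  assumes "\<And>s. s \<in> A \<Longrightarrow> prime (p s) \<and> 5 \<le> p s"
  shows "(\<Prod>s\<in>A. p s) ^ 2 mod 24 = 1"
proof -
  have "[p s ^ 2 = 1] (mod 24)" if "s \<in> A" for s
  proof -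
    have "odd (p s)" "\<not> 3 dvd p s"
      using assms[OF that] prime_odd_nat[of "p s"] by (auto simp: prime_nat_iff)
    then show ?thesis by (simp add: cong_def power2_mod_24_eq_1)
  qed
  then have "[(\<Prod>s\<in>A. p s ^ 2) = (\<Prod>s\<in>A. 1)] (mod 24)" by (rule cong_prod)
  then show ?thesis by (simp add: prod_power_distrib cong_def)
qed

lemma mult_div_pred_eq:
  fixes x m :: nat
  assumes "x mod m = 1"
  shows "m * ((x - 1) div m) + 1 = x"
proof -
  have "x = m * (x div m) + 1" using assms div_mult_mod_eq[of x m] by (simp add: mult.commute)
  then show ?thesis by (metis add_diff_cancel_right' nonzero_mult_div_cancel_left mult_zero_left)
qed

lemma not_square_if_Legendre_eq_minus_1:
  fixes a p k y :: nat
  assumes "Legendre (int a) (int p) = -1"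
  shows "y ^ 2 \<noteq> a + p * k"
proof
  assume "y ^ 2 = a + p * k"
  then have "[int y ^ 2 = int a] (mod int p)"
    by (simp add: cong_iff_dvd_diff flip: of_nat_power)
  then have "QuadRes (int p) (int a)" unfolding QuadRes_def by blast
  then show False using assms unfolding Legendre_def by (auto split: if_splits)
qed

lemma square_factor_of_square:
  fixes c t x :: nat
  assumes "x ^ 2 = c ^ 2 * t" "c \<noteq> 0"
  shows "\<exists>y. t = y ^ 2"
proof -
  have "c ^ 2 dvd x ^ 2" using assms(1) by simp
  then have "c dvd x" by simp
  then obtain y where "x = c * y" by blast
  then show ?thesis using assms by (auto simp: power_mult_distrib)
qed

theorem theorem3p7:
  fixes r :: nat and p :: "nat \<Rightarrow> nat" and n j :: nat
  assumes "r \<ge> 1"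
    and "\<And>s. 1 \<le> s \<Longrightarrow> s \<le> r \<Longrightarrow> prime (p s) \<and> p s \<ge> 5"
    and "j \<le> p r - 1"
    and "Legendre (int (24 * j + 1)) (int (p r)) = -1"
  shows "even (b 2 ((\<Prod>s=1..r-1. p s ^ 2) * p r * n
                 + ((24 * j + 1) * (\<Prod>s=1..r-1. p s ^ 2) - 1) div 24))"
proof -
  define R where "R = (\<Prod>s=1..r-1. p s)"
  define N where "N = R ^ 2 * p r * n + ((24 * j + 1) * R ^ 2 - 1) div 24"
  have "R \<noteq> 0" unfolding R_def using assms(2) by (auto simp: prime_gt_0_nat)
  have "R ^ 2 mod 24 = 1" unfolding R_def using assms(2) by (intro prod_primes_power2_mod_24) auto
  moreover have "(24 * j + 1) * R ^ 2 = R ^ 2 + 24 * (j * R ^ 2)" by (simp add: algebra_simps)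
  ultimately have "(24 * j + 1) * R ^ 2 mod 24 = 1" by presburger
  then have "24 * N + 1 = R ^ 2 * (24 * j + 1 + p r * (24 * n))"
    using mult_div_pred_eq[of "(24 * j + 1) * R ^ 2" 24] unfolding N_def by (simp add: algebra_simps)
  then have "\<nexists>x. 24 * N + 1 = x ^ 2"
    using square_factor_of_square \<open>R \<noteq> 0\<close> not_square_if_Legendre_eq_minus_1[OF assms(4)]
    by metis
  then have "even (b 2 N)"
    using even_card_distinct_partitions b_2_eq_card_distinct_partitions by simp
  then show ?thesis by (simp add: N_def R_def prod_power_distrib)
qed

end
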